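(* Let $X$ be a paracompact $C$-space, $(Y,\rho)$ a metric space, and $\varphi:X\rightrightarrows Y$ a $\rho$-continuous mapping such that each $\varphi(x)$, $x\in X$, is uniformly $UV^\infty$ (i.e. CE). Then for every continuous function $\varepsilon:X\to(0,+\infty)$, $\varphi$ has a continuous $\varepsilon$-selection.
   Context: A space $X$ is a $C$-space if for every sequence $\{\mathscr{U}_n:n<\omega\}$ of open covers of $X$ there is a sequence $\{\mathscr{V}_n:n<\omega\}$ of families of pairwise disjoint open subsets of $X$ such that each $\mathscr{V}_n$ refines $\mathscr{U}_n$ and $\bigcup_n\mathscr{V}_n$ covers $X$. A set-valued mapping $\varphi:X\rightrightarrows Y$ assigns a nonempty subset $\varphi(x)\subset Y$ to each $x$. $\mathbf{O}_\varepsilon(S)=\bigcup_{q\in S}\{y:\rho(y,q)<\varepsilon\}$. $\varphi$ is $\rho$-continuous if for every $\varepsilon>0$ each $x\in X$ has a neighbourhood $V$ with $\varphi(x)\subset\mathbf{O}_\varepsilon(\varphi(p))$ and $\varphi(p)\subset\mathbf{O}_\varepsilon(\varphi(x))$ for all $p\in V$. A subset $S\subset Y$ is uniformly $UV^\infty$ (CE) if for every $\varepsilon>0$ there exists $\delta\in(0,\varepsilon]$ such that $\mathbf{O}_\delta(S)$ is contractible in $\mathbf{O}_\varepsilon(S)$ (the inclusion $\mathbf{O}_\delta(S)\to\mathbf{O}_\varepsilon(S)$ is homotopic to a constant map). A map $f:X\to Y$ is an $\varepsilon$-selection for $\varphi$ if $f(x)\in\mathbf{O}_{\varepsilon(x)}(\varphi(x))$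 for every $x\in X$. *)

theory Defs
  imports "HOL-Analysis.Analysis"
begin

text \<open>Paracompact (Engelking convention: Hausdorff, and every open cover has a
  locally finite open refinement).\<close>
definition paracompact_space :: "'a topology \<Rightarrow> bool" where
  "paracompact_space X \<longleftrightarrow> Hausdorff_space X \<and>
     (\<forall>\<U>. (\<forall>U\<in>\<U>. openin X U) \<and> topspace X \<subseteq> \<Union>\<U> \<longrightarrow>
        (\<exists>\<V>. (\<forall>V\<in>\<V>. openin X V) \<and> topspace X \<subseteq> \<Union>\<V> \<and>
              (\<forall>V\<in>\<V>. \<exists>U\<in>\<U>. V \<subseteq> U) \<and> locally_finite_in X \<V>))"

definition C_space :: "'a topology \<Rightarrow> bool" where
  "C_space X \<longleftrightarrow>
     (\<forall>\<U> :: nat \<Rightarrow> 'a set set.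
        (\<forall>n. (\<forall>U\<in>\<U> n. openin X U) \<and> topspace X \<subseteq> \<Union>(\<U> n)) \<longrightarrow>
        (\<exists>\<V> :: nat \<Rightarrow> 'a set set.
           (\<forall>n. (\<forall>V\<in>\<V> n. openin X V) \<and> pairwise disjnt (\<V> n) \<and>
                (\<forall>V\<in>\<V> n. \<exists>U\<in>\<U> n. V \<subseteq> U)) \<and>
           topspace X \<subseteq> (\<Union>n. \<Union>(\<V> n))))"

definition Onbhd :: "real \<Rightarrow> 'b::metric_space set \<Rightarrow> 'b set" where
  "Onbhd e S = (\<Union>q\<in>S. {y. dist y q < e})"

definition rho_continuous :: "'a topology \<Rightarrow> ('a \<Rightarrow> 'b::metric_space set) \<Rightarrow> bool" where
  "rho_continuous X \<phi> \<longleftrightarrow>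
     (\<forall>e>0. \<forall>x\<in>topspace X. \<exists>V. openin X V \<and> x \<in> V \<and>
        (\<forall>p\<in>V. \<phi> x \<subseteq> Onbhd e (\<phi> p) \<and> \<phi> p \<subseteq> Onbhd e (\<phi> x)))"

definition uniformly_UV_infty :: "'b::metric_space set \<Rightarrow> bool" where
  "uniformly_UV_infty S \<longleftrightarrow>
     (\<forall>e>0. \<exists>d. 0 < d \<and> d \<le> e \<and>
        (\<exists>c. homotopic_with_canon (\<lambda>_. True) (Onbhd d S) (Onbhd e S) id (\<lambda>_. c)))"

definition eps_selection ::
  "'a topology \<Rightarrow> ('a \<Rightarrow> real) \<Rightarrow> ('a \<Rightarrow> 'b::metric_space set) \<Rightarrow> ('a \<Rightarrow> 'b) \<Rightarrow> bool" where
  "eps_selection X \<epsilon> \<phi> f \<longleftrightarrow> (\<forall>x\<in>topspace X. f x \<in> Onbhd (\<epsilon> x) (\<phi> x))"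

end

theory Submission
  imports Defs
begin

text \<open>
  Choose continuous radii \<open>\<epsilon>/2 = a\<^sub>0 \<ge> b\<^sub>0\<close>, \<open>a\<^sub>n\<^sub>+\<^sub>1 = b\<^sub>n/4 \<le> \<dots>\<close> such that the
  \<open>b\<^sub>n(p)\<close>-neighbourhood of \<open>\<phi> p\<close> contracts within its \<open>a\<^sub>n(p)\<close>-neighbourhood; uniform \<open>UV\<^sup>\<infinity>\<close>
  and \<open>\<rho>\<close>-continuity give such radii locally, paracompactness makes them continuous.
  The \<open>C\<close>-space property, applied at level \<open>n\<close> to the cover by open sets on which \<open>\<phi>\<close> stays close
  to its value at a centre, yields disjoint open families and hence a locally constant choice of
  centre on an open set \<open>W\<^sub>n\<close>, with \<open>\<Union>\<^sub>n W\<^sub>n = X\<close>; paracompactness gives bump functions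
  \<open>\<kappa>\<^sub>n\<close> supported in \<open>W\<^sub>n\<close> whose level sets \<open>{\<kappa>\<^sub>n = 1}\<close> still cover \<open>X\<close>.
  Near a point where \<open>\<kappa>\<^sub>n = 1\<close>, the selection is the apex of the contraction of level \<open>n\<close>
  pushed through the contractions of levels \<open>n - 1, \<dots>, 0\<close>, each run for time \<open>\<kappa>\<^sub>k\<close>: the shrinking
  radii keep every stage inside the domain of the next one, and the result lands within
  \<open>2 a\<^sub>0 = \<epsilon>\<close> of \<open>\<phi> p\<close>. It does not depend on \<open>n\<close> (a contraction at time 1 forgets its input),
  and it is continuous because the centres are locally constant.
\<close>

lemma paracompact_spaceD:
  assumes "paracompact_space X" "\<And>U. U \<in> \<U> \<Longrightarrow> openin X U" "topspace X \<subseteq> \<Union>\<U>"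
  obtains \<V> where "\<And>V. V \<in> \<V> \<Longrightarrow> openin X V" "topspace X \<subseteq> \<Union>\<V>"
    "\<And>V. V \<in> \<V> \<Longrightarrow> \<exists>U\<in>\<U>. V \<subseteq> U" "locally_finite_in X \<V>"
proof -
  have "\<exists>\<V>. (\<forall>V\<in>\<V>. openin X V) \<and> topspace X \<subseteq> \<Union>\<V> \<and>
          (\<forall>V\<in>\<V>. \<exists>U\<in>\<U>. V \<subseteq> U) \<and> locally_finite_in X \<V>"
    by (rule assms(1)[unfolded paracompact_space_def, THEN conjunct2, rule_format])
      (use assms(2,3) in auto)
  then show thesis
    by (elim exE conjE) (rule that; blast)
qed

lemma paracompact_closure_separation:
  assumes P: "paracompact_space X" and C: "closedin X C"
    and sep: "\<And>c. c \<in> C \<Longrightarrow> \<exists>U. openin X U \<and> c \<in> U \<and> disjnt D (X closure_of U)"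
  obtains U where "openin X U" "C \<subseteq> U" "disjnt D (X closure_of U)"
proof -
  define \<U> where "\<U> = insert (topspace X - C) {U. openin X U \<and> disjnt D (X closure_of U)}"
  have open_\<U>: "\<And>U. U \<in> \<U> \<Longrightarrow> openin X U"
    unfolding \<U>_def using C by auto
  have cover_\<U>: "topspace X \<subseteq> \<Union>\<U>"
  proof
    fix x assume "x \<in> topspace X"
    then show "x \<in> \<Union>\<U>"
      using sep[of x] unfolding \<U>_def by (cases "x \<in> C") auto
  qed
  obtain \<V> where V: "\<And>V. V \<in> \<V> \<Longrightarrow> openin X V" "topspace X \<subseteq> \<Union>\<V>"
    "\<And>V. V \<in> \<V> \<Longrightarrow> \<exists>U\<in>\<U>. V \<subseteq> U" "locally_finite_in X \<V>"
    using paracompact_spaceD[OF P open_\<U> cover_\<U>] by metis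
  define \<W> where "\<W> = {V\<in>\<V>. V \<inter> C \<noteq> {}}"
  have "disjnt D (X closure_of W)" if W: "W \<in> \<W>" for W
  proof -
    obtain U where "U \<in> \<U>" "W \<subseteq> U" "W \<inter> C \<noteq> {}"
      using V(3) W unfolding \<W>_def by blast
    then have "disjnt D (X closure_of U)"
      unfolding \<U>_def by auto
    then show ?thesis
      using closure_of_mono[OF \<open>W \<subseteq> U\<close>] by (rule disjnt_subset2)
  qed
  moreover have "locally_finite_in X \<W>"
    by (rule locally_finite_in_subset[OF V(4)]) (auto simp: \<W>_def)
  ultimately have "disjnt D (X closure_of \<Union>\<W>)"
    by (auto simp: closure_of_locally_finite_Union disjnt_def)
  moreover have "C \<subseteq> \<Union>\<W>"
    unfolding \<W>_def using V(2) closedin_subset[OF C] by blast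
  moreover have "openin X (\<Union>\<W>)"
    using V(1) unfolding \<W>_def by auto
  ultimately show thesis
    using that by blast
qed

lemma paracompact_imp_regular_space:
  assumes P: "paracompact_space X"
  shows "regular_space X"
  unfolding regular_space_def
proof clarify
  fix C a assume C: "closedin X C" and a: "a \<in> topspace X" "a \<notin> C"
  have "\<exists>U. openin X U \<and> c \<in> U \<and> disjnt {a} (X closure_of U)" if "c \<in> C" for c
  proof -
    have "c \<in> topspace X" "c \<noteq> a"
      using that C closedin_subset a by auto
    moreover have "Hausdorff_space X"
      using P unfolding paracompact_space_def by (rule conjunct1)
    ultimately obtain U V where "openin X U" "openin X V" "c \<in> U" "a \<in> V" "disjnt U V"
      using a unfolding Hausdorff_space_def by metis
    then have "a \<notin> X closure_of U"
      by (auto simp: in_closure_of disjnt_def)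
    with \<open>openin X U\<close> \<open>c \<in> U\<close> show ?thesis
      by auto
  qed
  then obtain U where U: "openin X U" "C \<subseteq> U" "disjnt {a} (X closure_of U)"
    using paracompact_closure_separation[OF P C] by metis
  show "\<exists>U V. openin X U \<and> openin X V \<and> a \<in> U \<and> C \<subseteq> V \<and> disjnt U V"
  proof (intro exI conjI)
    show "disjnt (topspace X - X closure_of U) U"
      using closure_of_subset[OF openin_subset[OF U(1)]] by (auto simp: disjnt_def)
  qed (use U a in auto)
qed

lemma paracompact_imp_normal_space:
  assumes P: "paracompact_space X"
  shows "normal_space X"
  unfolding normal_space
proof clarify
  fix S T assume S: "closedin X S" and T: "closedin X T" and "disjnt S T"
  then have "c \<in> topspace X - T" if "c \<in> S" for c
    using that closedin_subset[OF S] by (auto simp: disjnt_def)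
  then have "\<exists>U. openin X U \<and> c \<in> U \<and> disjnt T (X closure_of U)" if "c \<in> S" for c
    using paracompact_imp_regular_space[OF P] T that unfolding regular_space by blast
  then show "\<exists>U. openin X U \<and> S \<subseteq> U \<and> disjnt T (X closure_of U)"
    using paracompact_closure_separation[OF P S] by metis
qed

lemma paracompact_indexed_refinement:
  fixes U :: "'i \<Rightarrow> 'a set"
  assumes P: "paracompact_space X" and U: "\<And>i. i \<in> I \<Longrightarrow> openin X (U i)"
    and cover: "topspace X \<subseteq> (\<Union>i\<in>I. U i)"
  obtains G where "\<And>i. openin X (G i)" "\<And>i. i \<in> I \<Longrightarrow> G i \<subseteq> U i"
    "topspace X \<subseteq> (\<Union>i\<in>I. G i)"
    "\<And>x. x \<in> topspace X \<Longrightarrow> \<exists>N. openin X N \<and> x \<in> N \<and> finite {i\<in>I. G i \<inter> N \<noteq> {}}"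
proof -
  have open_UI: "\<And>S. S \<in> U ` I \<Longrightarrow> openin X S"
    using U by blast
  have cover_UI: "topspace X \<subseteq> \<Union>(U ` I)"
    using cover by simp
  obtain \<V> where V: "\<And>V. V \<in> \<V> \<Longrightarrow> openin X V" "topspace X \<subseteq> \<Union>\<V>"
    "\<And>V. V \<in> \<V> \<Longrightarrow> \<exists>S\<in>U ` I. V \<subseteq> S" "locally_finite_in X \<V>"
    using paracompact_spaceD[OF P open_UI cover_UI] by metis
  define idx where "idx V = (SOME i. i \<in> I \<and> V \<subseteq> U i)" for V
  have idx: "idx V \<in> I \<and> V \<subseteq> U (idx V)" if "V \<in> \<V>" for V
    unfolding idx_def by (rule someI_ex) (use V(3) that in blast)
  define G where "G i = \<Union>{V\<in>\<V>. idx V = i}" for i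
  show thesis
  proof
    show "openin X (G i)" for i
      unfolding G_def using V(1) by auto
    show "G i \<subseteq> U i" if "i \<in> I" for i
      unfolding G_def using idx by auto
    show "topspace X \<subseteq> (\<Union>i\<in>I. G i)"
    proof
      fix x assume "x \<in> topspace X"
      then obtain V where "V \<in> \<V>" "x \<in> V"
        using V(2) by (meson UnionE subsetD)
      then show "x \<in> (\<Union>i\<in>I. G i)"
        using idx unfolding G_def by blast
    qed
    show "\<exists>N. openin X N \<and> x \<in> N \<and> finite {i\<in>I. G i \<inter> N \<noteq> {}}"
      if x: "x \<in> topspace X" for x
    proof -
      obtain N where N: "openin X N" "x \<in> N" "finite {V\<in>\<V>. V \<inter> N \<noteq> {}}"
        using V(4) x unfolding locally_finite_in_def by blast
      have "{i\<in>I. G i \<inter> N \<noteq> {}} \<subseteq> idx ` {V\<in>\<V>. V \<inter> N \<noteq> {}}"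
        unfolding G_def by auto
      then have "finite {i\<in>I. G i \<inter> N \<noteq> {}}"
        by (rule finite_surj[OF N(3)])
      with N(1,2) show ?thesis
        by blast
    qed
  qed
qed

lemma paracompact_closed_shrinking:
  fixes G :: "'i \<Rightarrow> 'a set"
  assumes P: "paracompact_space X" and G: "\<And>i. i \<in> I \<Longrightarrow> openin X (G i)"
    and cover: "topspace X \<subseteq> (\<Union>i\<in>I. G i)"
  obtains K where "\<And>i. closedin X (K i)" "\<And>i. K i \<subseteq> G i" "topspace X \<subseteq> (\<Union>i\<in>I. K i)"
proof -
  define \<W> where "\<W> = {W. openin X W \<and> (\<exists>i\<in>I. X closure_of W \<subseteq> G i)}"
  have open_\<W>: "\<And>W. W \<in> \<W> \<Longrightarrow> openin X W"
    unfolding \<W>_def by blast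
  have cover_\<W>: "topspace X \<subseteq> \<Union>\<W>"
  proof
    fix x assume x: "x \<in> topspace X"
    then obtain i where i: "i \<in> I" "x \<in> G i"
      using cover by (meson UN_E subsetD)
    then have "closedin X (topspace X - G i)" "x \<in> topspace X - (topspace X - G i)"
      using G x by auto
    then obtain W where W: "openin X W" "x \<in> W" "disjnt (topspace X - G i) (X closure_of W)"
      using paracompact_imp_regular_space[OF P] unfolding regular_space by metis
    then have "X closure_of W \<subseteq> G i"
      using closure_of_subset_topspace[of X W] by (auto simp: disjnt_def)
    then show "x \<in> \<Union>\<W>"
      unfolding \<W>_def using W(1,2) i(1) by blast
  qed
  obtain \<Q> where Q: "\<And>Q. Q \<in> \<Q> \<Longrightarrow> openin X Q" "topspace X \<subseteq> \<Union>\<Q>"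
    "\<And>Q. Q \<in> \<Q> \<Longrightarrow> \<exists>W\<in>\<W>. Q \<subseteq> W" "locally_finite_in X \<Q>"
    using paracompact_spaceD[OF P open_\<W> cover_\<W>] by metis
  define K where "K i = \<Union>((\<lambda>S. X closure_of S) ` {Q\<in>\<Q>. X closure_of Q \<subseteq> G i})" for i
  show thesis
  proof
    show "closedin X (K i)" for i
      unfolding K_def
      by (intro closedin_Union_locally_finite_closure locally_finite_in_subset[OF Q(4)]) blast
    show "K i \<subseteq> G i" for i
      unfolding K_def by blast
    show "topspace X \<subseteq> (\<Union>i\<in>I. K i)"
    proof
      fix x assume "x \<in> topspace X"
      then obtain Q where Q_mem: "Q \<in> \<Q>" and "x \<in> Q"
        using Q(2) by (meson UnionE subsetD)
      then have x_Q: "x \<in> X closure_of Q"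
        using closure_of_subset[OF openin_subset[OF Q(1)[OF Q_mem]]] by blast
      obtain W where "W \<in> \<W>" "Q \<subseteq> W"
        using Q(3)[OF Q_mem] by (meson bexE)
      then obtain i where i: "i \<in> I" "X closure_of W \<subseteq> G i"
        unfolding \<W>_def by blast
      then have "X closure_of Q \<subseteq> G i"
        using closure_of_mono[OF \<open>Q \<subseteq> W\<close>] by (rule_tac order_trans)
      then have "X closure_of Q \<subseteq> K i"
        unfolding K_def using Q_mem by blast
      then show "x \<in> (\<Union>i\<in>I. K i)"
        using x_Q i(1) by blast
    qed
  qed
qed

text \<open>Truncating \<open>3 u - 1\<close> to \<open>[0, 1]\<close> turns the level sets \<open>u = 0\<close> and \<open>u = 1\<close> of a continuous
  \<open>u\<close> into interior points of the level sets \<open>0\<close> and \<open>1\<close> of the truncation.\<close>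

lemma truncated_bump_nbhd:
  fixes u :: "'a \<Rightarrow> real"
  assumes u: "continuous_map X euclideanreal u" and x: "x \<in> topspace X"
  shows "u x = 0 \<Longrightarrow> \<exists>N. openin X N \<and> x \<in> N \<and> (\<forall>p\<in>N. max 0 (min 1 (3 * u p - 1)) = 0)"
    and "u x = 1 \<Longrightarrow> \<exists>N. openin X N \<and> x \<in> N \<and> (\<forall>p\<in>N. max 0 (min 1 (3 * u p - 1)) = 1)"
proof -
  have small: "openin X {p \<in> topspace X. u p \<in> {..<1/3}}"
    and large: "openin X {p \<in> topspace X. u p \<in> {2/3<..}}"
    by (intro openin_continuous_map_preimage[OF u], simp)+
  show "\<exists>N. openin X N \<and> x \<in> N \<and> (\<forall>p\<in>N. max 0 (min 1 (3 * u p - 1)) = 0)" if "u x = 0"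
    using small x that by (intro exI[of _ "{p \<in> topspace X. u p \<in> {..<1/3}}"]) auto
  show "\<exists>N. openin X N \<and> x \<in> N \<and> (\<forall>p\<in>N. max 0 (min 1 (3 * u p - 1)) = 1)" if "u x = 1"
    using large x that by (intro exI[of _ "{p \<in> topspace X. u p \<in> {2/3<..}}"]) auto
qed

lemma paracompact_bump_functions:
  fixes U :: "'i \<Rightarrow> 'a set"
  assumes P: "paracompact_space X" and U: "\<And>i. i \<in> I \<Longrightarrow> openin X (U i)"
    and cover: "topspace X \<subseteq> (\<Union>i\<in>I. U i)"
  obtains \<kappa> :: "'i \<Rightarrow> 'a \<Rightarrow> real" where
    "\<And>i. i \<in> I \<Longrightarrow> continuous_map X euclideanreal (\<kappa> i)"
    "\<And>i x. 0 \<le> \<kappa> i x" "\<And>i x. \<kappa> i x \<le> 1"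
    "\<And>i x. \<lbrakk>i \<in> I; x \<in> topspace X; x \<notin> U i\<rbrakk> \<Longrightarrow> \<exists>N. openin X N \<and> x \<in> N \<and> (\<forall>p\<in>N. \<kappa> i p = 0)"
    "\<And>x. x \<in> topspace X \<Longrightarrow> \<exists>i\<in>I. \<exists>N. openin X N \<and> x \<in> N \<and> (\<forall>p\<in>N. \<kappa> i p = 1)"
    "\<And>x. x \<in> topspace X \<Longrightarrow> \<exists>N. openin X N \<and> x \<in> N \<and> finite {i\<in>I. \<exists>p\<in>N. \<kappa> i p \<noteq> 0}"
proof -
  obtain G where G: "\<And>i. openin X (G i)" "\<And>i. i \<in> I \<Longrightarrow> G i \<subseteq> U i"
    "topspace X \<subseteq> (\<Union>i\<in>I. G i)"
    "\<And>x. x \<in> topspace X \<Longrightarrow> \<exists>N. openin X N \<and> x \<in> N \<and> finite {i\<in>I. G i \<inter> N \<noteq> {}}"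
    using paracompact_indexed_refinement[OF P U cover] by blast
  obtain K where K: "\<And>i. closedin X (K i)" "\<And>i. K i \<subseteq> G i" "topspace X \<subseteq> (\<Union>i\<in>I. K i)"
    using paracompact_closed_shrinking[OF P G(1) G(3)] by blast
  have "\<forall>i. \<exists>u. continuous_map X (top_of_set {0..1}) u \<and>
          u ` (topspace X - G i) \<subseteq> {0} \<and> u ` K i \<subseteq> {1::real}"
  proof
    fix i
    have "closedin X (topspace X - G i)" "disjnt (topspace X - G i) (K i)"
      using G(1)[of i] K(2)[of i] by (auto simp: disjnt_def)
    then show "\<exists>u. continuous_map X (top_of_set {0..1}) u \<and>
          u ` (topspace X - G i) \<subseteq> {0} \<and> u ` K i \<subseteq> {1::real}"
      by (rule Urysohn_lemma[OF paracompact_imp_normal_space[OF P] _ K(1) _ zero_le_one]) blast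
  qed
  from choice[OF this] obtain u where "\<forall>i. continuous_map X (top_of_set {0..1}) (u i) \<and>
      u i ` (topspace X - G i) \<subseteq> {0} \<and> u i ` K i \<subseteq> {1::real}" ..
  then have u: "\<And>i. continuous_map X (top_of_set {0..1}) (u i)"
    "\<And>i. u i ` (topspace X - G i) \<subseteq> {0}" "\<And>i. u i ` K i \<subseteq> {1::real}"
    by auto
  have u_cont: "continuous_map X euclideanreal (u i)" for i
    using u(1) continuous_map_in_subtopology by blast
  have u0: "u i x = 0" if "x \<in> topspace X" "x \<notin> G i" for i x
    using u(2)[of i] that by blast
  have u1: "u i x = 1" if "x \<in> K i" for i x
    using u(3)[of i] that by blast
  define \<kappa> where "\<kappa> i x = max 0 (min 1 (3 * u i x - 1))" for i x
  show thesis
  proof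
    show "continuous_map X euclideanreal (\<kappa> i)" for i
      unfolding \<kappa>_def by (intro continuous_intros u_cont)
    show "0 \<le> \<kappa> i x" "\<kappa> i x \<le> 1" for i x
      unfolding \<kappa>_def by auto
    show "\<exists>N. openin X N \<and> x \<in> N \<and> (\<forall>p\<in>N. \<kappa> i p = 0)"
      if "i \<in> I" "x \<in> topspace X" "x \<notin> U i" for i x
      unfolding \<kappa>_def using that G(2) u0 by (intro truncated_bump_nbhd(1)[OF u_cont]) auto
    show "\<exists>i\<in>I. \<exists>N. openin X N \<and> x \<in> N \<and> (\<forall>p\<in>N. \<kappa> i p = 1)"
      if x: "x \<in> topspace X" for x
    proof -
      obtain i where "i \<in> I" "x \<in> K i"
        using K(3) x by (meson UN_E subsetD)
      moreover have "\<exists>N. openin X N \<and> x \<in> N \<and> (\<forall>p\<in>N. \<kappa> i p = 1)"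
        unfolding \<kappa>_def by (rule truncated_bump_nbhd(2)[OF u_cont x u1[OF \<open>x \<in> K i\<close>]])
      ultimately show ?thesis
        by blast
    qed
    show "\<exists>N. openin X N \<and> x \<in> N \<and> finite {i\<in>I. \<exists>p\<in>N. \<kappa> i p \<noteq> 0}"
      if x: "x \<in> topspace X" for x
    proof -
      obtain N where N: "openin X N" "x \<in> N" "finite {i\<in>I. G i \<inter> N \<noteq> {}}"
        using G(4) x by metis
      have "{i\<in>I. \<exists>p\<in>N. \<kappa> i p \<noteq> 0} \<subseteq> {i\<in>I. G i \<inter> N \<noteq> {}}"
        using u0 openin_subset[OF N(1)] unfolding \<kappa>_def by fastforce
      then show ?thesis
        using N finite_subset by blast
    qed
  qed
qed

lemma continuous_map_locally:
  assumes "\<And>x. x \<in> topspace X \<Longrightarrow> \<exists>M. openin X M \<and> x \<in> M \<and> continuous_map (subtopology X M) Y f"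
  shows "continuous_map X Y f"
proof -
  define M where "M x = (SOME M. openin X M \<and> x \<in> M \<and> continuous_map (subtopology X M) Y f)" for x
  have M: "openin X (M x) \<and> x \<in> M x \<and> continuous_map (subtopology X (M x)) Y f"
    if "x \<in> topspace X" for x
    unfolding M_def by (rule someI_ex) (rule assms[OF that])
  show ?thesis
    by (rule pasting_lemma[where I="topspace X" and T=M and f="\<lambda>_. f"]) (use M in auto)
qed

lemma continuous_map_subtopology_eq:
  assumes "continuous_map (subtopology X M) Y f" "\<And>x. x \<in> M \<Longrightarrow> f x = g x"
  shows "continuous_map (subtopology X M) Y g"
  using assms(1) by (rule continuous_map_eq) (simp add: assms(2))

lemma continuous_map_Max_insert:
  fixes g :: "'i \<Rightarrow> 'a \<Rightarrow> real"
  assumes "finite F" "\<And>i. i \<in> F \<Longrightarrow> continuous_map X euclideanreal (g i)"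
  shows "continuous_map X euclideanreal (\<lambda>x. Max (insert c ((\<lambda>i. g i x) ` F)))"
  using assms
proof (induction F rule: finite_induct)
  case (insert j F)
  have "Max (insert c ((\<lambda>i. g i x) ` insert j F)) = max (g j x) (Max (insert c ((\<lambda>i. g i x) ` F)))"
    for x
  proof -
    have "insert c ((\<lambda>i. g i x) ` insert j F) = insert (g j x) (insert c ((\<lambda>i. g i x) ` F))"
      by auto
    then show ?thesis
      using insert.hyps(1) by (simp del: Max_insert add: Max_insert[of "insert c _"])
  qed
  then show ?case
    using insert by (simp add: continuous_map_real_max)
qed simp

lemma continuous_map_Max_locally_finite:
  fixes g :: "'i \<Rightarrow> 'a \<Rightarrow> real"
  assumes cont: "\<And>i. i \<in> I \<Longrightarrow> continuous_map X euclideanreal (g i)"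
    and fin: "\<And>x. x \<in> topspace X \<Longrightarrow> \<exists>N. openin X N \<and> x \<in> N \<and> finite {i\<in>I. \<exists>p\<in>N. g i p \<noteq> 0}"
  shows "continuous_map X euclideanreal (\<lambda>p. Max (insert 0 ((\<lambda>i. g i p) ` {i\<in>I. g i p \<noteq> 0})))"
proof (rule continuous_map_locally)
  fix x assume "x \<in> topspace X"
  then obtain M where M: "openin X M" "x \<in> M" "finite {i\<in>I. \<exists>p\<in>M. g i p \<noteq> 0}"
    using fin by blast
  define F where "F = {i\<in>I. \<exists>p\<in>M. g i p \<noteq> 0}"
  have "continuous_map X euclideanreal (\<lambda>p. Max (insert 0 ((\<lambda>i. g i p) ` F)))"
    using M(3) cont unfolding F_def by (intro continuous_map_Max_insert) auto
  then have "continuous_map (subtopology X M) euclideanreal (\<lambda>p. Max (insert 0 ((\<lambda>i. g i p) ` F)))"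
    by (rule continuous_map_from_subtopology)
  moreover have "Max (insert 0 ((\<lambda>i. g i p) ` F)) = Max (insert 0 ((\<lambda>i. g i p) ` {i\<in>I. g i p \<noteq> 0}))"
    if "p \<in> M" for p
  proof -
    have "insert 0 ((\<lambda>i. g i p) ` F) = insert 0 ((\<lambda>i. g i p) ` {i\<in>I. g i p \<noteq> 0})"
      using that unfolding F_def by auto
    then show ?thesis
      by simp
  qed
  ultimately have "continuous_map (subtopology X M) euclideanreal
      (\<lambda>p. Max (insert 0 ((\<lambda>i. g i p) ` {i\<in>I. g i p \<noteq> 0})))"
    by (rule continuous_map_subtopology_eq)
  with M(1,2) show "\<exists>M. openin X M \<and> x \<in> M \<and> continuous_map (subtopology X M) euclideanreal
      (\<lambda>p. Max (insert 0 ((\<lambda>i. g i p) ` {i\<in>I. g i p \<noteq> 0})))"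
    by blast
qed

lemma paracompact_continuous_minorant:
  assumes P: "paracompact_space X"
    and local: "\<And>x. x \<in> topspace X \<Longrightarrow> \<exists>N c. openin X N \<and> x \<in> N \<and> 0 < c \<and> (\<forall>p\<in>N. Q p c)"
    and downward: "\<And>p c c'. \<lbrakk>Q p c; 0 < c'; c' \<le> c\<rbrakk> \<Longrightarrow> Q p c'"
  obtains b where "continuous_map X euclideanreal b" "\<And>p. p \<in> topspace X \<Longrightarrow> 0 < b p \<and> Q p (b p)"
proof -
  define N where "N x = fst (SOME Nc. openin X (fst Nc) \<and> x \<in> fst Nc \<and> 0 < snd Nc \<and> (\<forall>p\<in>fst Nc. Q p (snd Nc)))" for x
  define c where "c x = snd (SOME Nc. openin X (fst Nc) \<and> x \<in> fst Nc \<and> 0 < snd Nc \<and> (\<forall>p\<in>fst Nc. Q p (snd Nc)))" for x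
  have Nc: "openin X (N x) \<and> x \<in> N x \<and> 0 < c x \<and> (\<forall>p\<in>N x. Q p (c x))" if "x \<in> topspace X" for x
  proof -
    have "\<exists>Nc. openin X (fst Nc) \<and> x \<in> fst Nc \<and> 0 < snd Nc \<and> (\<forall>p\<in>fst Nc. Q p (snd Nc))"
      using local[OF that] by auto
    then show ?thesis
      unfolding N_def c_def by (rule someI_ex)
  qed
  have N_open: "\<And>x. x \<in> topspace X \<Longrightarrow> openin X (N x)"
    and cover: "topspace X \<subseteq> (\<Union>x\<in>topspace X. N x)"
    using Nc by blast+
  obtain \<kappa> :: "'a \<Rightarrow> 'a \<Rightarrow> real" where
    \<kappa>_cont: "\<And>i. i \<in> topspace X \<Longrightarrow> continuous_map X euclideanreal (\<kappa> i)" and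
    \<kappa>_bounds: "\<And>i x. 0 \<le> \<kappa> i x" "\<And>i x. \<kappa> i x \<le> 1" and
    \<kappa>_vanish: "\<And>i x. \<lbrakk>i \<in> topspace X; x \<in> topspace X; x \<notin> N i\<rbrakk> \<Longrightarrow>
       \<exists>M. openin X M \<and> x \<in> M \<and> (\<forall>p\<in>M. \<kappa> i p = 0)" and
    \<kappa>_one: "\<And>x. x \<in> topspace X \<Longrightarrow> \<exists>i\<in>topspace X. \<exists>M. openin X M \<and> x \<in> M \<and> (\<forall>p\<in>M. \<kappa> i p = 1)" and
    \<kappa>_finite: "\<And>x. x \<in> topspace X \<Longrightarrow> \<exists>M. openin X M \<and> x \<in> M \<and> finite {i\<in>topspace X. \<exists>p\<in>M. \<kappa> i p \<noteq> 0}"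
    using paracompact_bump_functions[OF P N_open cover] by blast
  \<comment> \<open>The bound at \<open>p\<close> is the largest of the weighted local bounds \<open>\<kappa> i p * c i\<close>; it is at most
     some \<open>c i\<close> with \<open>p \<in> N i\<close>, and at least the \<open>c i\<close> of a bump with \<open>\<kappa> i p = 1\<close>.\<close>
  define g where "g i p = \<kappa> i p * c i" for i p
  define b where "b p = Max (insert 0 ((\<lambda>i. g i p) ` {i\<in>topspace X. g i p \<noteq> 0}))" for p
  have g_finite: "\<exists>M. openin X M \<and> x \<in> M \<and> finite {i\<in>topspace X. \<exists>p\<in>M. g i p \<noteq> 0}"
    if x: "x \<in> topspace X" for x
  proof -
    obtain M where M: "openin X M" "x \<in> M" "finite {i\<in>topspace X. \<exists>p\<in>M. \<kappa> i p \<noteq> 0}"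
      using \<kappa>_finite[OF x] by blast
    have "{i\<in>topspace X. \<exists>p\<in>M. g i p \<noteq> 0} \<subseteq> {i\<in>topspace X. \<exists>p\<in>M. \<kappa> i p \<noteq> 0}"
      unfolding g_def by auto
    with M show ?thesis
      using finite_subset by blast
  qed
  show thesis
  proof
    show "continuous_map X euclideanreal b"
      unfolding b_def
    proof (rule continuous_map_Max_locally_finite)
      show "continuous_map X euclideanreal (g i)" if "i \<in> topspace X" for i
        unfolding g_def by (intro continuous_intros \<kappa>_cont that)
    qed (rule g_finite)
    fix p assume p: "p \<in> topspace X"
    define S where "S = insert 0 ((\<lambda>i. g i p) ` {i\<in>topspace X. g i p \<noteq> 0})"
    have "finite S"
    proof -
      obtain M where "p \<in> M" and fin: "finite {i\<in>topspace X. \<exists>p\<in>M. g i p \<noteq> 0}"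
        using g_finite[OF p] by blast
      have "{i\<in>topspace X. g i p \<noteq> 0} \<subseteq> {i\<in>topspace X. \<exists>p\<in>M. g i p \<noteq> 0}"
        using \<open>p \<in> M\<close> by blast
      then show ?thesis
        unfolding S_def using finite_subset[OF _ fin] by blast
    qed
    obtain i M where i: "i \<in> topspace X" "p \<in> M" "\<forall>q\<in>M. \<kappa> i q = 1"
      using \<kappa>_one[OF p] by blast
    then have "g i p = c i" "0 < c i"
      using Nc[OF i(1)] unfolding g_def by auto
    then have "c i \<in> S"
      unfolding S_def using i(1) by (intro insertI2 image_eqI[where x = i]) auto
    then have "c i \<le> b p"
      unfolding b_def S_def[symmetric] by (rule Max_ge[OF \<open>finite S\<close>])
    then have b_pos: "0 < b p"
      using \<open>0 < c i\<close> by linarith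
    have "b p \<in> S"
      unfolding b_def S_def[symmetric] using \<open>finite S\<close> by (rule Max_in) (simp add: S_def)
    then obtain j where j: "j \<in> topspace X" "\<kappa> j p \<noteq> 0" "b p = \<kappa> j p * c j"
      using b_pos unfolding S_def g_def by auto
    then have "p \<in> N j"
      using \<kappa>_vanish[OF j(1) p] by blast
    then have "Q p (c j)"
      using Nc[OF j(1)] by blast
    moreover have "b p \<le> c j"
      using j(3) \<kappa>_bounds[of j p] Nc[OF j(1)] by (simp add: mult_left_le_one_le)
    ultimately show "0 < b p \<and> Q p (b p)"
      using downward b_pos by blast
  qed
qed

lemma Onbhd_mono: "e \<le> e' \<Longrightarrow> Onbhd e S \<subseteq> Onbhd e' S"
  unfolding Onbhd_def by force

lemma subset_Onbhd_self: "0 < e \<Longrightarrow> S \<subseteq> Onbhd e S"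
  unfolding Onbhd_def by force

lemma Onbhd_subset_Onbhd_add:
  assumes "S \<subseteq> Onbhd \<eta> T"
  shows "Onbhd e S \<subseteq> Onbhd (e + \<eta>) T"
proof
  fix y assume "y \<in> Onbhd e S"
  then obtain q where q: "q \<in> S" "dist y q < e"
    unfolding Onbhd_def by blast
  then obtain t where t: "t \<in> T" "dist q t < \<eta>"
    using assms unfolding Onbhd_def by blast
  then have "dist y t < e + \<eta>"
    using q dist_triangle[of y t q] by linarith
  then show "y \<in> Onbhd (e + \<eta>) T"
    using t unfolding Onbhd_def by blast
qed

definition contracts_within :: "'b::topological_space set \<Rightarrow> 'b set \<Rightarrow> (real \<times> 'b \<Rightarrow> 'b) \<Rightarrow> bool" where
  "contracts_within A B h \<longleftrightarrow> continuous_on ({0..1} \<times> A) h \<and> h ` ({0..1} \<times> A) \<subseteq> B \<and>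
     (\<forall>w. h (0, w) = w) \<and> (\<forall>w w'. h (1, w) = h (1, w'))"

lemma contracts_within_mono:
  "\<lbrakk>contracts_within A B h; A' \<subseteq> A; B \<subseteq> B'\<rbrakk> \<Longrightarrow> contracts_within A' B' h"
  unfolding contracts_within_def by (blast intro: continuous_on_subset)

lemma contracts_withinI_homotopic:
  assumes "homotopic_with_canon (\<lambda>_. True) A B id (\<lambda>_. c)"
  shows "\<exists>h. contracts_within A B h"
proof -
  obtain h where h: "continuous_map (prod_topology (top_of_set {0..1::real}) (top_of_set A)) (top_of_set B) h"
    "\<forall>w. h (0, w) = id w" "\<forall>w. h (1, w) = c"
    using assms unfolding homotopic_with_def by blast
  then have "contracts_within A B h"
    unfolding contracts_within_def
    by (simp add: continuous_map_in_subtopology image_subset_iff_funcset)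
  then show ?thesis
    by blast
qed

definition nbhd_contractible :: "'b::metric_space set \<Rightarrow> real \<Rightarrow> real \<Rightarrow> bool" where
  "nbhd_contractible S d e \<longleftrightarrow> (\<exists>h. contracts_within (Onbhd d S) (Onbhd e S) h)"

lemma uniformly_UV_inftyD:
  assumes "uniformly_UV_infty S" "0 < e"
  obtains d where "0 < d" "d \<le> e" "nbhd_contractible S d e"
  using assms contracts_withinI_homotopic unfolding uniformly_UV_infty_def nbhd_contractible_def
  by metis

lemma nbhd_contractible_mono:
  "\<lbrakk>nbhd_contractible S d e; d' \<le> d; e \<le> e'\<rbrakk> \<Longrightarrow> nbhd_contractible S d' e'"
  unfolding nbhd_contractible_def by (meson Onbhd_mono contracts_within_mono)

lemma nbhd_contractible_transfer:
  assumes "S \<subseteq> Onbhd \<eta> T" "T \<subseteq> Onbhd \<eta> S" "nbhd_contractible S d e" "d' + \<eta> \<le> d"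
  shows "nbhd_contractible T d' (e + \<eta>)"
proof -
  have "Onbhd d' T \<subseteq> Onbhd d S"
    using Onbhd_subset_Onbhd_add[OF assms(2)] Onbhd_mono[OF assms(4)] by blast
  moreover have "Onbhd e S \<subseteq> Onbhd (e + \<eta>) T"
    by (rule Onbhd_subset_Onbhd_add[OF assms(1)])
  ultimately show ?thesis
    using assms(3) contracts_within_mono unfolding nbhd_contractible_def by blast
qed

lemma continuous_contraction_radius:
  fixes \<phi> :: "'a \<Rightarrow> 'b::metric_space set"
  assumes P: "paracompact_space X" and \<phi>: "rho_continuous X \<phi>"
    and UV: "\<forall>x\<in>topspace X. uniformly_UV_infty (\<phi> x)"
    and a: "continuous_map X euclideanreal a" "\<forall>p\<in>topspace X. 0 < a p"
  obtains b where "continuous_map X euclideanreal b"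
    "\<And>p. p \<in> topspace X \<Longrightarrow> 0 < b p \<and> b p \<le> a p \<and> nbhd_contractible (\<phi> p) (b p) (a p)"
proof -
  define Q where "Q p c \<longleftrightarrow> c \<le> a p \<and> nbhd_contractible (\<phi> p) c (a p)" for p c
  have downward: "Q p c'" if "Q p c" "0 < c'" "c' \<le> c" for p c c'
    using that nbhd_contractible_mono[of "\<phi> p" c "a p" c' "a p"] unfolding Q_def by auto
  \<comment> \<open>A contraction for \<open>\<phi> x\<close> at scale \<open>a x / 2\<close> transfers to all \<open>\<phi> p\<close> that are \<open>\<delta>/2\<close>-close to \<open>\<phi> x\<close>,
     at the cost of enlarging the target radius by \<open>\<delta>/2\<close>.\<close>
  have local: "\<exists>N c. openin X N \<and> x \<in> N \<and> 0 < c \<and> (\<forall>p\<in>N. Q p c)"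
    if x: "x \<in> topspace X" for x
  proof -
    obtain \<delta> where \<delta>: "0 < \<delta>" "\<delta> \<le> a x / 2" "nbhd_contractible (\<phi> x) \<delta> (a x / 2)"
      by (rule uniformly_UV_inftyD[of "\<phi> x" "a x / 2"]) (use UV a(2) x in auto)
    obtain V where V: "openin X V" "x \<in> V"
      "\<forall>p\<in>V. \<phi> x \<subseteq> Onbhd (\<delta>/2) (\<phi> p) \<and> \<phi> p \<subseteq> Onbhd (\<delta>/2) (\<phi> x)"
      using \<phi> x \<delta>(1) unfolding rho_continuous_def by (meson half_gt_zero)
    define N where "N = V \<inter> {p \<in> topspace X. a p \<in> {3/4 * a x <..}}"
    have "openin X N"
      unfolding N_def by (intro openin_Int V(1) openin_continuous_map_preimage[OF a(1)]) simp
    moreover have "x \<in> N"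
      unfolding N_def using V(2) x a(2) by auto
    moreover have "Q p (\<delta>/2)" if p: "p \<in> N" for p
    proof -
      have "nbhd_contractible (\<phi> p) (\<delta>/2) (a x / 2 + \<delta>/2)"
        using V(3) p \<delta>(3) unfolding N_def by (intro nbhd_contractible_transfer) auto
      moreover have "3/4 * a x < a p"
        using p unfolding N_def by auto
      then have "a x / 2 + \<delta>/2 \<le> a p" "\<delta>/2 \<le> a p"
        using \<delta>(1,2) by linarith+
      ultimately show ?thesis
        unfolding Q_def using nbhd_contractible_mono by blast
    qed
    ultimately show ?thesis
      using \<delta>(1) by (intro exI[of _ N] exI[of _ "\<delta>/2"]) auto
  qed
  show thesis
  proof (rule paracompact_continuous_minorant[OF P local downward])
    fix b assume b: "continuous_map X euclideanreal b" "\<And>p. p \<in> topspace X \<Longrightarrow> 0 < b p \<and> Q p (b p)"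
    show thesis
      by (rule that[OF b(1)]) (use b(2) in \<open>auto simp: Q_def\<close>)
  qed
qed

lemma contraction_scales:
  fixes \<phi> :: "'a \<Rightarrow> 'b::metric_space set"
  assumes P: "paracompact_space X" and \<phi>: "rho_continuous X \<phi>"
    and UV: "\<forall>x\<in>topspace X. uniformly_UV_infty (\<phi> x)"
    and a0: "continuous_map X euclideanreal a0" "\<forall>p\<in>topspace X. 0 < a0 p"
  obtains a b :: "nat \<Rightarrow> 'a \<Rightarrow> real" where
    "\<And>n. continuous_map X euclideanreal (a n)" "\<And>n. continuous_map X euclideanreal (b n)"
    "\<And>n p. p \<in> topspace X \<Longrightarrow> 0 < b n p \<and> b n p \<le> a n p \<and> nbhd_contractible (\<phi> p) (b n p) (a n p)"
    "a 0 = a0" "\<And>n. a (Suc n) = (\<lambda>p. b n p / 4)"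
proof -
  define admissible where "admissible a \<longleftrightarrow>
    continuous_map X euclideanreal a \<and> (\<forall>p\<in>topspace X. 0 < a p)" for a :: "'a \<Rightarrow> real"
  define radius_for where "radius_for a b \<longleftrightarrow> continuous_map X euclideanreal b \<and>
    (\<forall>p\<in>topspace X. 0 < b p \<and> b p \<le> a p \<and> nbhd_contractible (\<phi> p) (b p) (a p))" for a b :: "'a \<Rightarrow> real"
  define radius where "radius a = (SOME b. radius_for a b)" for a
  have radius: "radius_for a (radius a)" if adm: "admissible a" for a
  proof -
    obtain b where "continuous_map X euclideanreal b"
      "\<And>p. p \<in> topspace X \<Longrightarrow> 0 < b p \<and> b p \<le> a p \<and> nbhd_contractible (\<phi> p) (b p) (a p)"
      using continuous_contraction_radius[OF P \<phi> UV] adm unfolding admissible_def by blast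
    then have "radius_for a b"
      unfolding radius_for_def by blast
    then show ?thesis
      unfolding radius_def by (rule someI[where P = "radius_for a"])
  qed
  define a where "a n = rec_nat a0 (\<lambda>_ a p. radius a p / 4) n" for n
  have a_simps: "a 0 = a0" "a (Suc n) = (\<lambda>p. radius (a n) p / 4)" for n
    unfolding a_def by simp_all
  have admissible: "admissible (a n)" for n
  proof (induction n)
    case 0
    then show ?case
      using a0 unfolding admissible_def a_simps by blast
  next
    case (Suc n)
    then show ?case
      using radius[OF Suc] unfolding admissible_def radius_for_def a_simps
      by (auto intro: continuous_intros)
  qed
  show thesis
  proof (rule that[of a "\<lambda>n. radius (a n)"])
    show "continuous_map X euclideanreal (a n)" for n
      using admissible unfolding admissible_def by blast
  qed (use radius[OF admissible] a_simps in \<open>auto simp: radius_for_def\<close>)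
qed

lemma C_space_locally_constant_centres:
  assumes C: "C_space X"
    and R: "\<And>n x. x \<in> topspace X \<Longrightarrow> \<exists>N. openin X N \<and> x \<in> N \<and> (\<forall>p\<in>N. R n x p)"
  obtains W :: "nat \<Rightarrow> 'a set" and z :: "nat \<Rightarrow> 'a \<Rightarrow> 'a" where
    "\<And>n. openin X (W n)" "topspace X \<subseteq> (\<Union>n. W n)"
    "\<And>n p. p \<in> W n \<Longrightarrow> z n p \<in> topspace X \<and> R n (z n p) p"
    "\<And>n x. x \<in> W n \<Longrightarrow> \<exists>M. openin X M \<and> x \<in> M \<and> M \<subseteq> W n \<and> z n constant_on M"
proof -
  define \<U> where "\<U> n = {N. openin X N \<and> (\<exists>y\<in>topspace X. \<forall>p\<in>N. R n y p)}" for n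
  have "topspace X \<subseteq> \<Union>(\<U> n)" for n
  proof
    fix x assume "x \<in> topspace X"
    then obtain N where "openin X N" "x \<in> N" "\<forall>p\<in>N. R n x p"
      using R by blast
    then show "x \<in> \<Union>(\<U> n)"
      unfolding \<U>_def using \<open>x \<in> topspace X\<close> by blast
  qed
  then have "\<forall>n. (\<forall>U\<in>\<U> n. openin X U) \<and> topspace X \<subseteq> \<Union>(\<U> n)"
    unfolding \<U>_def by blast
  from mp[OF C[unfolded C_space_def, THEN spec[where x = \<U>]] this] obtain \<V> :: "nat \<Rightarrow> 'a set set" where
    \<V>: "\<forall>n. (\<forall>V\<in>\<V> n. openin X V) \<and> pairwise disjnt (\<V> n) \<and> (\<forall>V\<in>\<V> n. \<exists>U\<in>\<U> n. V \<subseteq> U)"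
      "topspace X \<subseteq> (\<Union>n. \<Union>(\<V> n))"
    by blast
  define centre where "centre n V = (SOME y. y \<in> topspace X \<and> (\<forall>p\<in>V. R n y p))" for n V
  have centre: "centre n V \<in> topspace X \<and> (\<forall>p\<in>V. R n (centre n V) p)" if V: "V \<in> \<V> n" for n V
  proof -
    obtain U where "U \<in> \<U> n" "V \<subseteq> U"
      using \<V>(1) V by blast
    then have "\<exists>y. y \<in> topspace X \<and> (\<forall>p\<in>V. R n y p)"
      unfolding \<U>_def by blast
    then show ?thesis
      unfolding centre_def by (rule someI_ex)
  qed
  \<comment> \<open>Each point lies in at most one member of the disjoint family \<open>\<V> n\<close>.\<close>
  define z where "z n p = centre n (THE V. V \<in> \<V> n \<and> p \<in> V)" for n p
  have z: "z n p = centre n V" if V: "V \<in> \<V> n" "p \<in> V" for n p V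
  proof -
    have "V' = V" if "V' \<in> \<V> n \<and> p \<in> V'" for V'
      using \<V>(1) V that unfolding pairwise_def disjnt_def by blast
    then have "(THE V. V \<in> \<V> n \<and> p \<in> V) = V"
      using V by (intro the_equality) blast+
    then show ?thesis
      unfolding z_def by simp
  qed
  show thesis
  proof
    show "openin X (\<Union>(\<V> n))" for n
      using \<V>(1) by (intro openin_Union) blast
    show "topspace X \<subseteq> (\<Union>n. \<Union>(\<V> n))"
      by (fact \<V>(2))
    show "z n p \<in> topspace X \<and> R n (z n p) p" if p: "p \<in> \<Union>(\<V> n)" for n p
    proof -
      obtain V where "V \<in> \<V> n" "p \<in> V"
        using p by blast
      then show ?thesis
        using centre[OF \<open>V \<in> \<V> n\<close>] z[OF \<open>V \<in> \<V> n\<close>] by simp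
    qed
    show "\<exists>M. openin X M \<and> x \<in> M \<and> M \<subseteq> \<Union>(\<V> n) \<and> z n constant_on M"
      if x: "x \<in> \<Union>(\<V> n)" for n x
    proof -
      obtain V where V: "V \<in> \<V> n" "x \<in> V"
        using x by blast
      moreover have "z n constant_on V"
        unfolding constant_on_def using z[OF V(1)] by (intro exI[of _ "centre n V"]) simp
      moreover have "openin X V"
        using \<V>(1) V(1) by blast
      ultimately show ?thesis
        by blast
    qed
  qed
qed

lemma Onbhd_near_centre:
  fixes A B :: "'b::metric_space set"
  assumes "A \<subseteq> Onbhd (\<beta> / 4) B" "B \<subseteq> Onbhd (\<beta> / 4) A"
    and "3/4 * \<alpha> < \<alpha>'" "\<beta>' < 3/2 * \<beta>" "0 < \<beta>" "\<beta> \<le> \<alpha>"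
  shows "Onbhd (\<beta>' / 2) B \<subseteq> Onbhd \<beta> A" "Onbhd \<alpha> A \<subseteq> Onbhd (2 * \<alpha>') B"
proof -
  have "Onbhd (\<beta>' / 2) B \<subseteq> Onbhd (\<beta>' / 2 + \<beta> / 4) A"
    by (rule Onbhd_subset_Onbhd_add[OF assms(2)])
  also have "\<dots> \<subseteq> Onbhd \<beta> A"
    using assms(4) by (intro Onbhd_mono) simp
  finally show "Onbhd (\<beta>' / 2) B \<subseteq> Onbhd \<beta> A" .
  have "Onbhd \<alpha> A \<subseteq> Onbhd (\<alpha> + \<beta> / 4) B"
    by (rule Onbhd_subset_Onbhd_add[OF assms(1)])
  also have "\<dots> \<subseteq> Onbhd (2 * \<alpha>') B"
    using assms(3,5,6) by (intro Onbhd_mono) simp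
  finally show "Onbhd \<alpha> A \<subseteq> Onbhd (2 * \<alpha>') B" .
qed

locale telescoping_homotopies =
  fixes X :: "'a topology"
    and S :: "nat \<Rightarrow> 'a \<Rightarrow> 'b::topological_space set"
    and W :: "nat \<Rightarrow> 'a set"
    and \<kappa> :: "nat \<Rightarrow> 'a \<Rightarrow> real"
    and D :: "nat \<Rightarrow> 'a \<Rightarrow> 'b set"
    and h :: "nat \<Rightarrow> 'a \<Rightarrow> real \<times> 'b \<Rightarrow> 'b"
  assumes S_nonempty: "p \<in> topspace X \<Longrightarrow> S k p \<noteq> {}"
    and S_Suc_subset: "p \<in> topspace X \<Longrightarrow> S (Suc k) p \<subseteq> S k p"
    and S_Suc_subset_D: "p \<in> W k \<Longrightarrow> S (Suc k) p \<subseteq> D k p"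
    and contracts: "p \<in> W k \<Longrightarrow> contracts_within (D k p) (S k p) (h k p)"
    and locally_constant: "x \<in> W k \<Longrightarrow>
      \<exists>M. openin X M \<and> x \<in> M \<and> M \<subseteq> W k \<and> h k constant_on M \<and> D k constant_on M"
    and \<kappa>_continuous: "continuous_map X euclideanreal (\<kappa> k)"
    and \<kappa>_nonneg: "0 \<le> \<kappa> k p" and \<kappa>_le_1: "\<kappa> k p \<le> 1"
    and \<kappa>_vanishes: "\<lbrakk>x \<in> topspace X; x \<notin> W k\<rbrakk> \<Longrightarrow> \<exists>N. openin X N \<and> x \<in> N \<and> (\<forall>p\<in>N. \<kappa> k p = 0)"
    and \<kappa>_eq_1: "x \<in> topspace X \<Longrightarrow> \<exists>n N. openin X N \<and> x \<in> N \<and> (\<forall>p\<in>N. \<kappa> n p = 1)"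
begin

lemma in_W_if_\<kappa>_nonzero: "\<lbrakk>p \<in> topspace X; \<kappa> k p \<noteq> 0\<rbrakk> \<Longrightarrow> p \<in> W k"
  using \<kappa>_vanishes by blast

definition apex :: "nat \<Rightarrow> 'a \<Rightarrow> 'b" where
  "apex n p = h n p (1, undefined)"

text \<open>Outside \<open>W k\<close> the homotopy \<open>h k p\<close> carries no information, so the step is the identity
  wherever \<open>\<kappa> k\<close> vanishes.\<close>

definition step :: "nat \<Rightarrow> 'a \<Rightarrow> 'b \<Rightarrow> 'b" where
  "step k p w = (if \<kappa> k p = 0 then w else h k p (\<kappa> k p, w))"

definition tower :: "nat \<Rightarrow> nat \<Rightarrow> 'a \<Rightarrow> 'b" where
  "tower k n p = foldr (\<lambda>i. step i p) [k..<n] (apex n p)"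

definition selection :: "'a \<Rightarrow> 'b" where
  "selection p = tower 0 (LEAST n. \<kappa> n p = 1) p"

lemma step_eq: "p \<in> W k \<Longrightarrow> step k p w = h k p (\<kappa> k p, w)"
  using contracts unfolding step_def contracts_within_def by auto

lemma apex_eq:
  assumes "p \<in> W n"
  shows "apex n p = h n p (1, w)"
  using contracts[OF assms] unfolding apex_def contracts_within_def by blast

lemma tower_self [simp]: "tower n n p = apex n p"
  unfolding tower_def by simp

lemma tower_Suc: "k < n \<Longrightarrow> tower k n p = step k p (tower (Suc k) n p)"
  unfolding tower_def by (simp add: upt_conv_Cons)

lemma tower_mem_S:
  assumes p: "p \<in> topspace X" and one: "\<kappa> n p = 1" and "k \<le> n"
  shows "tower k n p \<in> S k p"
  using \<open>k \<le> n\<close>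
proof (induction k rule: inc_induct)
  case base
  have pW: "p \<in> W n"
    using in_W_if_\<kappa>_nonzero[OF p] one by simp
  obtain w where "w \<in> S (Suc n) p"
    using S_nonempty[OF p] by blast
  then have "w \<in> D n p"
    using S_Suc_subset_D[OF pW] by blast
  then have "h n p (1, w) \<in> S n p"
    using contracts[OF pW] unfolding contracts_within_def by auto
  then show ?case
    using apex_eq[OF pW] by simp
next
  case (step k)
  show ?case
  proof (cases "\<kappa> k p = 0")
    case True
    then show ?thesis
      using step.IH S_Suc_subset[OF p] tower_Suc[OF step.hyps(2)] unfolding step_def by auto
  next
    case False
    then have pW: "p \<in> W k"
      using in_W_if_\<kappa>_nonzero[OF p] by blast
    then have "tower (Suc k) n p \<in> D k p"
      using step.IH S_Suc_subset_D by blast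
    then have "h k p (\<kappa> k p, tower (Suc k) n p) \<in> S k p"
      using contracts[OF pW] \<kappa>_nonneg \<kappa>_le_1 unfolding contracts_within_def by auto
    then show ?thesis
      using tower_Suc[OF step.hyps(2)] step_eq[OF pW] by simp
  qed
qed

lemma tower_eq_apex:
  assumes "p \<in> topspace X" "\<kappa> n p = 1" "n \<le> m"
  shows "tower n m p = apex n p"
proof (cases "n = m")
  case False
  have pW: "p \<in> W n"
    using in_W_if_\<kappa>_nonzero assms(1,2) by simp
  have "tower n m p = h n p (1, tower (Suc n) m p)"
    using False assms(2,3) tower_Suc step_eq[OF pW] by simp
  then show ?thesis
    using apex_eq[OF pW] by simp
qed simp

lemma tower_0_eq:
  assumes "p \<in> topspace X" "\<kappa> n p = 1" "n \<le> m"
  shows "tower 0 m p = tower 0 n p"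
proof -
  have "[0..<m] = [0..<n] @ [n..<m]"
    using assms(3) upt_add_eq_append[of 0 n "m - n"] by simp
  then have "tower 0 m p = foldr (\<lambda>i. step i p) [0..<n] (tower n m p)"
    unfolding tower_def by simp
  then show ?thesis
    unfolding tower_eq_apex[OF assms] by (simp add: tower_def)
qed

lemma selection_eq:
  assumes "p \<in> topspace X" "\<kappa> n p = 1"
  shows "selection p = tower 0 n p"
proof -
  define L where "L = (LEAST n. \<kappa> n p = 1)"
  have "\<kappa> L p = 1" "L \<le> n"
    unfolding L_def using assms(2) by (auto intro: LeastI Least_le)
  then show ?thesis
    unfolding selection_def L_def[symmetric]
    using tower_0_eq[OF assms(1) \<open>\<kappa> L p = 1\<close> \<open>L \<le> n\<close>] by simp
qed

lemma selection_mem_S0: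
  assumes "p \<in> topspace X"
  shows "selection p \<in> S 0 p"
proof -
  obtain n where "\<kappa> n p = 1"
    using \<kappa>_eq_1[OF assms] by blast
  then show ?thesis
    using selection_eq tower_mem_S assms by simp
qed

definition frozen_on :: "'a set \<Rightarrow> nat \<Rightarrow> bool" where
  "frozen_on M k \<longleftrightarrow> (\<forall>p\<in>M. \<kappa> k p = 0) \<or> (M \<subseteq> W k \<and> h k constant_on M \<and> D k constant_on M)"

lemma frozen_on_subset: "\<lbrakk>frozen_on M k; M' \<subseteq> M\<rbrakk> \<Longrightarrow> frozen_on M' k"
  unfolding frozen_on_def by (auto intro: constant_on_subset)

lemma frozen_nbhd:
  assumes "x \<in> topspace X"
  shows "\<exists>M. openin X M \<and> x \<in> M \<and> frozen_on M k"
proof (cases "x \<in> W k")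
  case True
  then obtain M where "openin X M" "x \<in> M" "M \<subseteq> W k" "h k constant_on M" "D k constant_on M"
    using locally_constant by blast
  then show ?thesis
    unfolding frozen_on_def by blast
next
  case False
  then show ?thesis
    using \<kappa>_vanishes[OF assms] unfolding frozen_on_def by auto
qed

lemma tower_continuous:
  assumes M: "M \<subseteq> topspace X" "x \<in> M" and one: "\<And>p. p \<in> M \<Longrightarrow> \<kappa> n p = 1"
    and frozen: "\<And>i. i \<le> n \<Longrightarrow> frozen_on M i" and "k \<le> n"
  shows "continuous_map (subtopology X M) euclidean (tower k n)"
  using \<open>k \<le> n\<close>
proof (induction k rule: inc_induct)
  case base
  have "\<not> (\<forall>p\<in>M. \<kappa> n p = 0)"
    using one M(2) by force
  then have "h n constant_on M"
    using frozen[of n] unfolding frozen_on_def by blast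
  then obtain g where g: "\<And>p. p \<in> M \<Longrightarrow> h n p = g"
    unfolding constant_on_def by blast
  have "continuous_map (subtopology X M) euclidean (\<lambda>_. g (1, undefined))"
    by simp
  moreover have "g (1, undefined) = tower n n p" if "p \<in> M" for p
    unfolding tower_self apex_def g[OF that] ..
  ultimately show ?case
    by (rule continuous_map_subtopology_eq)
next
  case (step k)
  note IH = step.IH and tower = tower_Suc[OF step.hyps(2)]
  have "frozen_on M k"
    using frozen step.hyps by simp
  then consider "\<forall>p\<in>M. \<kappa> k p = 0" | "M \<subseteq> W k" "h k constant_on M" "D k constant_on M"
    unfolding frozen_on_def by blast
  then show ?case
  proof cases
    case 1
    then have "tower (Suc k) n p = tower k n p" if "p \<in> M" for p
      using tower that unfolding step_def by simp
    with IH show ?thesis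
      by (rule continuous_map_subtopology_eq)
  next
    case 2
    then obtain g E where g: "\<And>p. p \<in> M \<Longrightarrow> h k p = g" and E: "\<And>p. p \<in> M \<Longrightarrow> D k p = E"
      unfolding constant_on_def by metis
    have eq: "(g \<circ> (\<lambda>p. (\<kappa> k p, tower (Suc k) n p))) p = tower k n p" if "p \<in> M" for p
      using tower step_eq[of p k] 2(1) g that by auto
    have "continuous_map (subtopology X M) euclidean (g \<circ> (\<lambda>p. (\<kappa> k p, tower (Suc k) n p)))"
    proof (rule continuous_map_compose)
      have "tower (Suc k) n p \<in> E" if "p \<in> M" for p
        using tower_mem_S[of p n "Suc k"] S_Suc_subset_D[of p k] one that M(1) step.hyps 2(1) E
        by auto
      moreover have "continuous_map (subtopology X M) euclidean (\<lambda>p. (\<kappa> k p, tower (Suc k) n p))"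
        using continuous_map_pairedI[OF continuous_map_from_subtopology[OF \<kappa>_continuous] IH] by simp
      ultimately show "continuous_map (subtopology X M) (top_of_set ({0..1} \<times> E))
          (\<lambda>p. (\<kappa> k p, tower (Suc k) n p))"
        using \<kappa>_nonneg \<kappa>_le_1 by (auto simp: continuous_map_in_subtopology)
      show "continuous_map (top_of_set ({0..1} \<times> E)) euclidean g"
        using contracts[of x k] 2(1) M(2) g E unfolding contracts_within_def by auto
    qed
    then show ?thesis
      using eq by (rule continuous_map_subtopology_eq)
  qed
qed

lemma continuous_selection: "continuous_map X euclidean selection"
proof (rule continuous_map_locally)
  fix x assume x: "x \<in> topspace X"
  obtain n N where N: "openin X N" "x \<in> N" "\<forall>p\<in>N. \<kappa> n p = 1"
    using \<kappa>_eq_1[OF x] by blast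
  define M where "M i = (SOME M. openin X M \<and> x \<in> M \<and> frozen_on M i)" for i
  have M: "openin X (M i) \<and> x \<in> M i \<and> frozen_on (M i) i" for i
    unfolding M_def by (rule someI_ex) (rule frozen_nbhd[OF x])
  define MM where "MM = N \<inter> (\<Inter>i\<le>n. M i)"
  have MM: "openin X MM" "x \<in> MM"
    unfolding MM_def using N(1,2) M by (auto intro!: openin_Int openin_INT2)
  have MM_sub: "MM \<subseteq> topspace X"
    by (rule openin_subset[OF MM(1)])
  have "continuous_map (subtopology X MM) euclidean (tower 0 n)"
  proof (rule tower_continuous[OF MM_sub MM(2)])
    show "\<kappa> n p = 1" if "p \<in> MM" for p
      using that N(3) unfolding MM_def by blast
    show "frozen_on MM i" if "i \<le> n" for i
    proof (rule frozen_on_subset)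
      show "frozen_on (M i) i"
        using M by blast
      show "MM \<subseteq> M i"
        unfolding MM_def using that by blast
    qed
  qed simp
  moreover have "tower 0 n p = selection p" if "p \<in> MM" for p
  proof -
    have "p \<in> topspace X" "\<kappa> n p = 1"
      using that MM_sub N(3) unfolding MM_def by auto
    then show ?thesis
      using selection_eq by simp
  qed
  ultimately have "continuous_map (subtopology X MM) euclidean selection"
    by (rule continuous_map_subtopology_eq)
  with MM show "\<exists>M. openin X M \<and> x \<in> M \<and> continuous_map (subtopology X M) euclidean selection"
    by blast
qed

end

lemma continuous_selection_from_scales:
  fixes \<phi> :: "'a \<Rightarrow> 'b::metric_space set"
  assumes P: "paracompact_space X" and C: "C_space X"
    and nonempty: "\<forall>x\<in>topspace X. \<phi> x \<noteq> {}" and \<phi>: "rho_continuous X \<phi>"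
    and a: "\<And>n. continuous_map X euclideanreal (a n)" and b: "\<And>n. continuous_map X euclideanreal (b n)"
    and ab: "\<And>n p. p \<in> topspace X \<Longrightarrow> 0 < b n p \<and> b n p \<le> a n p \<and> nbhd_contractible (\<phi> p) (b n p) (a n p)"
    and a_Suc: "\<And>n. a (Suc n) = (\<lambda>p. b n p / 4)"
  shows "\<exists>f. continuous_map X euclidean f \<and> (\<forall>p\<in>topspace X. f p \<in> Onbhd (2 * a 0 p) (\<phi> p))"
proof -
  define near where "near n y p \<longleftrightarrow> \<phi> y \<subseteq> Onbhd (b n y / 4) (\<phi> p) \<and> \<phi> p \<subseteq> Onbhd (b n y / 4) (\<phi> y) \<and>
    3/4 * a n y < a n p \<and> b n p < 3/2 * b n y" for n y p
  have near_nbhd: "\<exists>N. openin X N \<and> x \<in> N \<and> (\<forall>p\<in>N. near n x p)"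
    if x: "x \<in> topspace X" for n x
  proof -
    have pos: "0 < b n x" "0 < a n x"
      using ab[OF x, of n] by auto
    then have "0 < b n x / 4"
      by simp
    from \<phi>[unfolded rho_continuous_def, rule_format, OF this x] obtain V where V: "openin X V" "x \<in> V"
      "\<forall>p\<in>V. \<phi> x \<subseteq> Onbhd (b n x / 4) (\<phi> p) \<and> \<phi> p \<subseteq> Onbhd (b n x / 4) (\<phi> x)"
      by blast
    define N where "N = V \<inter> {p \<in> topspace X. a n p \<in> {3/4 * a n x <..}} \<inter> {p \<in> topspace X. b n p \<in> {..< 3/2 * b n x}}"
    have "openin X N"
      unfolding N_def
      by (intro openin_Int V(1) openin_continuous_map_preimage[OF a] openin_continuous_map_preimage[OF b]) simp_all
    moreover have "x \<in> N"
      unfolding N_def using V(2) x pos by auto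
    moreover have "\<forall>p\<in>N. near n x p"
      unfolding N_def near_def using V(3) by auto
    ultimately show ?thesis
      by blast
  qed
  obtain W z where W: "\<And>n. openin X (W n)" "topspace X \<subseteq> (\<Union>n. W n)"
    and z: "\<And>n p. p \<in> W n \<Longrightarrow> z n p \<in> topspace X \<and> near n (z n p) p"
    and z_const: "\<And>n x. x \<in> W n \<Longrightarrow> \<exists>M. openin X M \<and> x \<in> M \<and> M \<subseteq> W n \<and> z n constant_on M"
    using C_space_locally_constant_centres[where R = near, OF C near_nbhd] by blast
  obtain \<kappa> :: "nat \<Rightarrow> 'a \<Rightarrow> real" where
    \<kappa>: "\<And>n. n \<in> UNIV \<Longrightarrow> continuous_map X euclideanreal (\<kappa> n)"
      "\<And>n x. 0 \<le> \<kappa> n x" "\<And>n x. \<kappa> n x \<le> 1"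
      "\<And>n x. \<lbrakk>n \<in> UNIV; x \<in> topspace X; x \<notin> W n\<rbrakk> \<Longrightarrow> \<exists>N. openin X N \<and> x \<in> N \<and> (\<forall>p\<in>N. \<kappa> n p = 0)"
      "\<And>x. x \<in> topspace X \<Longrightarrow> \<exists>n\<in>UNIV. \<exists>N. openin X N \<and> x \<in> N \<and> (\<forall>p\<in>N. \<kappa> n p = 1)"
      "\<And>x. x \<in> topspace X \<Longrightarrow> \<exists>N. openin X N \<and> x \<in> N \<and> finite {n\<in>UNIV. \<exists>p\<in>N. \<kappa> n p \<noteq> 0}"
    using paracompact_bump_functions[OF P W(1) W(2)] by blast
  define H where "H n y = (SOME h. contracts_within (Onbhd (b n y) (\<phi> y)) (Onbhd (a n y) (\<phi> y)) h)" for n y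
  have H: "contracts_within (Onbhd (b n y) (\<phi> y)) (Onbhd (a n y) (\<phi> y)) (H n y)" if "y \<in> topspace X" for n y
  proof -
    have "\<exists>h. contracts_within (Onbhd (b n y) (\<phi> y)) (Onbhd (a n y) (\<phi> y)) h"
      using ab[OF that, of n] unfolding nbhd_contractible_def by blast
    then show ?thesis
      unfolding H_def by (rule someI_ex)
  qed
  have D: "Onbhd (b k p / 2) (\<phi> p) \<subseteq> Onbhd (b k (z k p)) (\<phi> (z k p))"
    and S: "Onbhd (a k (z k p)) (\<phi> (z k p)) \<subseteq> Onbhd (2 * a k p) (\<phi> p)" if "p \<in> W k" for k p
    using Onbhd_near_centre[of "\<phi> (z k p)" "b k (z k p)" "\<phi> p" "a k (z k p)" "a k p" "b k p"]
      z[OF that] ab[of "z k p" k] unfolding near_def by auto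
  interpret telescoping_homotopies X "\<lambda>k p. Onbhd (2 * a k p) (\<phi> p)" W \<kappa>
    "\<lambda>k p. Onbhd (b k (z k p)) (\<phi> (z k p))" "\<lambda>k p. H k (z k p)"
  proof
    fix p k assume p: "p \<in> topspace X"
    show "Onbhd (2 * a k p) (\<phi> p) \<noteq> {}"
      using nonempty p ab[OF p, of k] subset_Onbhd_self[of "2 * a k p" "\<phi> p"] by auto
    show "Onbhd (2 * a (Suc k) p) (\<phi> p) \<subseteq> Onbhd (2 * a k p) (\<phi> p)"
      using ab[OF p, of k] a_Suc by (intro Onbhd_mono) simp
  next
    fix p k assume p: "p \<in> W k"
    show "Onbhd (2 * a (Suc k) p) (\<phi> p) \<subseteq> Onbhd (b k (z k p)) (\<phi> (z k p))"
      using D[OF p] a_Suc by simp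
    show "contracts_within (Onbhd (b k (z k p)) (\<phi> (z k p))) (Onbhd (2 * a k p) (\<phi> p)) (H k (z k p))"
      using z[OF p] by (intro contracts_within_mono[OF H order_refl S[OF p]]) blast
  next
    fix x k assume "x \<in> W k"
    then obtain M where "openin X M" "x \<in> M" "M \<subseteq> W k" "z k constant_on M"
      using z_const by blast
    then show "\<exists>M. openin X M \<and> x \<in> M \<and> M \<subseteq> W k \<and>
        (\<lambda>p. H k (z k p)) constant_on M \<and> (\<lambda>p. Onbhd (b k (z k p)) (\<phi> (z k p))) constant_on M"
      using constant_on_compose[of "z k" M "H k"] constant_on_compose[of "z k" M "\<lambda>y. Onbhd (b k y) (\<phi> y)"]
      unfolding o_def by blast
  next
    show "continuous_map X euclideanreal (\<kappa> k)" "0 \<le> \<kappa> k p" "\<kappa> k p \<le> 1" for k p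
      using \<kappa>(1-3) by blast+
    show "\<exists>N. openin X N \<and> x \<in> N \<and> (\<forall>p\<in>N. \<kappa> k p = 0)" if "x \<in> topspace X" "x \<notin> W k" for x k
      using \<kappa>(4) that by blast
    show "\<exists>n N. openin X N \<and> x \<in> N \<and> (\<forall>p\<in>N. \<kappa> n p = 1)" if "x \<in> topspace X" for x
      using \<kappa>(5)[OF that] by blast
  qed
  show ?thesis
    by (intro exI[of _ selection] conjI ballI continuous_selection selection_mem_S0)
qed

theorem theorem4p1:
  fixes X :: "'a topology" and \<phi> :: "'a \<Rightarrow> 'b::metric_space set"
  assumes "paracompact_space X" and "C_space X"
    and "\<forall>x\<in>topspace X. \<phi> x \<noteq> {}"
    and "rho_continuous X \<phi>"
    and "\<forall>x\<in>topspace X. uniformly_UV_infty (\<phi> x)"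
    and "continuous_map X euclideanreal \<epsilon>" and "\<forall>x\<in>topspace X. \<epsilon> x > 0"
  shows "\<exists>f. continuous_map X euclidean f \<and> eps_selection X \<epsilon> \<phi> f"
proof -
  have half_\<epsilon>: "continuous_map X euclideanreal (\<lambda>p. \<epsilon> p / 2)" "\<forall>p\<in>topspace X. 0 < \<epsilon> p / 2"
    using assms(6,7) by (auto intro: continuous_intros)
  obtain a b where scales:
    "\<And>n. continuous_map X euclideanreal (a n)" "\<And>n. continuous_map X euclideanreal (b n)"
    "\<And>n p. p \<in> topspace X \<Longrightarrow> 0 < b n p \<and> b n p \<le> a n p \<and> nbhd_contractible (\<phi> p) (b n p) (a n p)"
    "a 0 = (\<lambda>p. \<epsilon> p / 2)" "\<And>n. a (Suc n) = (\<lambda>p. b n p / 4)"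
    using contraction_scales[OF assms(1,4,5) half_\<epsilon>] by blast
  obtain f where "continuous_map X euclidean f" "\<forall>p\<in>topspace X. f p \<in> Onbhd (\<epsilon> p) (\<phi> p)"
    using continuous_selection_from_scales[where a = a and b = b, OF assms(1-4) scales(1,2,3,5)] scales(4)
    by auto
  then show ?thesis
    unfolding eps_selection_def by blast
qed

end
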